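(* For given positive integers $N_s$ ($s\in\mathcal S$) and $N=\sum_s N_s$, let $M_s=\lfloor N/N_s\rfloor$ and $r_s=N\bmod N_s$. Consider an sAEDS with $|\mathcal X_s|=N_s$ in which, for each $s$, exactly $N_s-r_s$ states $x\in\mathcal X_s$ have $|\mathcal F^+_x|=M_s$ and the other $r_s$ have $|\mathcal F^+_x|=M_s+1$, and, for a stationary distribution $Q$ of its state chain, each $\mathcal F^+_x$ is encoded by a phased-in code (with $|\mathcal F^+_x|$ codewords) matched to $Q$ restricted to $\mathcal F^+_x$. Then $$L\le H(p)+D(p\|q)+\sigma+\sum_{s\in\mathcal S}p(s)\lg\frac{M_s+\tilde Q_{M_s+1}}{N/N_s},$$ where $\sigma=\lg\lg e+1-\lg e$ and $\tilde Q_{M_s+1}=\sum_{x\in\mathcal X_s,\ |\mathcal F^+_x|=M_s+1}\tilde Q_s(x)$.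
   Context: Let $\mathcal S$ be a finite alphabet with $|\mathcal S|\ge 2$ and $p=\{p(s)\}$ a probability distribution with $p(s)>0$ for all $s$ (i.i.d. source). $\mathcal B=\{0,1\}^*$ (including the empty word), $l(\beta)$ the word length, $\lg=\log_2$. An AEDS with finite state set $\mathcal X$, $|\mathcal X|=N$, consists of maps $E_{\hat x}:\mathcal S\to\mathcal B$ and $F^-_{\hat x}:\mathcal S\to\mathcal X$ ($\hat x\in\mathcal X$) such that for every $x\in\mathcal X$ the words $E_{\hat x}(s)$ over all pairs $(\hat x,s)$ with $F^-_{\hat x}(s)=x$ are pairwise distinct and form a prefix-free set. The state chain is the Markov chain on $\mathcal X$ moving from $\hat x$ to $F^-_{\hat x}(s)$ with probability $p(s)$; for a stationary distribution $Q$ the average code length is $L=\sum_{\hat x}\sum_s p(s)Q(\hat x)l(E_{\hat x}(s))$. A state-divided AEDS (sAEDS) is an AEDS for which the sets $\mathcal X_s=\{F^-_{\hat x}(s):\hat x\in\mathcal X\}$ are pairwise disjoint with union $\mathcal X$; $N_s=|\mathcal X_s|$, $q(s)=N_s/N$. For $x\in\mathcal X_s$, $\mathcal F^+_x=\{\hat x: F^-_{\hat x}(s)=x\}$; for each $s$ these sets partition $\mathcal X$. An sAEDS is thus specified by the partitions and, for each $x\in\mathcal X_s$, an injective prefix-free code $\hat x\mapsto E_{\hat x}(s)$ on $\mathcal F^+_x$; the state chain (hence $Q$) depends only on $p$ and the partitions. For $x\in\mathcal X_s$, $\tilde Q_s(x)=\sum_{\hat x\in\mathcal F^+_x}Q(\hat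 x)$. Phased-in code: for an integer $M\ge1$ and $k=\lceil\lg M\rceil$, a prefix-free code on an $M$-element set with $2^k-M$ codewords of length $k-1$ and $2M-2^k$ codewords of length $k$ (for $M=1$, the single empty word). It is matched to a distribution on that set if the length-$(k-1)$ codewords go to $2^k-M$ elements of largest probability. $H(p)=-\sum_s p(s)\lg p(s)$, $D(p\|q)=\sum_s p(s)\lg(p(s)/q(s))$. *)

theory Defs
  imports Complex_Main "HOL-Library.Sublist"
begin

definition prefix_free :: "bool list set \<Rightarrow> bool" where
  "prefix_free W \<longleftrightarrow> (\<forall>a\<in>W. \<forall>b\<in>W. a \<noteq> b \<longrightarrow> \<not> prefix a b)"

text \<open>AEDS with encoding maps \<open>E x' s\<close> and transitions \<open>F x' s\<close> (= F-minus).\<close>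
definition is_AEDS :: "('x::finite \<Rightarrow> 's::finite \<Rightarrow> bool list) \<Rightarrow> ('x \<Rightarrow> 's \<Rightarrow> 'x) \<Rightarrow> bool" where
  "is_AEDS E F \<longleftrightarrow> (\<forall>x. inj_on (\<lambda>(x', s). E x' s) {(x', s). F x' s = x}
      \<and> prefix_free ((\<lambda>(x', s). E x' s) ` {(x', s). F x' s = x}))"

definition Xs :: "('x \<Rightarrow> 's \<Rightarrow> 'x) \<Rightarrow> 's \<Rightarrow> 'x set" where
  "Xs F s = range (\<lambda>x'. F x' s)"

definition is_sAEDS :: "('x::finite \<Rightarrow> 's::finite \<Rightarrow> bool list) \<Rightarrow> ('x \<Rightarrow> 's \<Rightarrow> 'x) \<Rightarrow> bool" where
  "is_sAEDS E F \<longleftrightarrow> is_AEDS E F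
     \<and> (\<forall>s t. s \<noteq> t \<longrightarrow> Xs F s \<inter> Xs F t = {})
     \<and> (\<Union>s. Xs F s) = UNIV"

definition Fplus :: "('x \<Rightarrow> 's \<Rightarrow> 'x) \<Rightarrow> 's \<Rightarrow> 'x \<Rightarrow> 'x set" where
  "Fplus F s x = {x'. F x' s = x}"

definition stationary :: "('s::finite \<Rightarrow> real) \<Rightarrow> ('x::finite \<Rightarrow> 's \<Rightarrow> 'x) \<Rightarrow> ('x \<Rightarrow> real) \<Rightarrow> bool" where
  "stationary p F Q \<longleftrightarrow> (\<forall>x. Q x \<ge> 0) \<and> (\<Sum>x\<in>UNIV. Q x) = 1
     \<and> (\<forall>y. Q y = (\<Sum>x'\<in>UNIV. \<Sum>s\<in>{s. F x' s = y}. Q x' * p s))"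

definition avg_len :: "('s::finite \<Rightarrow> real) \<Rightarrow> ('x::finite \<Rightarrow> real) \<Rightarrow> ('x \<Rightarrow> 's \<Rightarrow> bool list) \<Rightarrow> real" where
  "avg_len p Q E = (\<Sum>x'\<in>UNIV. \<Sum>s\<in>UNIV. p s * Q x' * real (length (E x' s)))"

definition phased_in :: "'a set \<Rightarrow> ('a \<Rightarrow> bool list) \<Rightarrow> bool" where
  "phased_in A c \<longleftrightarrow> finite A \<and> card A \<ge> 1 \<and> inj_on c A \<and> prefix_free (c ` A) \<and>
    (let M = card A; k = nat \<lceil>log 2 (real M)\<rceil> in
      if M = 1 then (\<forall>a\<in>A. c a = [])
      else (card {a\<in>A. length (c a) = k - 1} = 2 ^ k - M
            \<and> card {a\<in>A. length (c a) = k} = 2 * M - 2 ^ k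
            \<and> (\<forall>a\<in>A. length (c a) = k - 1 \<or> length (c a) = k)))"

definition phased_in_matched :: "'a set \<Rightarrow> ('a \<Rightarrow> bool list) \<Rightarrow> ('a \<Rightarrow> real) \<Rightarrow> bool" where
  "phased_in_matched A c w \<longleftrightarrow> phased_in A c \<and>
     (\<forall>a\<in>A. \<forall>b\<in>A. length (c a) < length (c b) \<longrightarrow> w b \<le> w a)"

definition entropy :: "('s::finite \<Rightarrow> real) \<Rightarrow> real" where
  "entropy p = - (\<Sum>s\<in>UNIV. p s * log 2 (p s))"

definition KL :: "('s::finite \<Rightarrow> real) \<Rightarrow> ('s \<Rightarrow> real) \<Rightarrow> real" where
  "KL p q = (\<Sum>s\<in>UNIV. p s * log 2 (p s / q s))"

end

theory Submission
  imports Defs "HOL-Analysis.Convex"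
begin

text \<open>
  Fix a symbol \<open>s\<close>. The states \<open>x \<in> X\<^sub>s\<close> group the stationary mass into the blocks
  \<open>F\<^sup>+\<^sub>x\<close>, and a phased-in code matched to \<open>Q\<close> spends at most \<open>lg |F\<^sup>+\<^sub>x| + \<sigma>\<close> bits per
  unit of mass on its block: the short codewords carry at least their proportional share of
  the mass, and \<open>\<sigma>\<close> (\<open>phased_in_redundancy\<close>) is the maximum over real \<open>k\<close> of
  \<open>k + 1 - 2\<^sup>k/M - lg M\<close>. Concavity of \<open>lg\<close> bounds the \<open>\<tilde>Q\<^sub>s\<close>-average of \<open>lg |F\<^sup>+\<^sub>x|\<close> by
  \<open>lg\<close> of the average block size; as all blocks have size \<open>M\<^sub>s\<close> or \<open>M\<^sub>s + 1\<close>, that average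
  is \<open>M\<^sub>s\<close> plus the \<open>\<tilde>Q\<^sub>s\<close>-mass of the larger blocks. Averaging over \<open>p\<close> and splitting
  \<open>lg a = - lg p + lg (p/q) + lg (a q)\<close> produces \<open>H(p) + D(p\<parallel>q)\<close>.
\<close>

definition phased_in_redundancy :: real where
  "phased_in_redundancy = log 2 (log 2 (exp 1)) + 1 - log 2 (exp 1)"

definition Qtilde :: "('x \<Rightarrow> 's \<Rightarrow> 'x) \<Rightarrow> ('x \<Rightarrow> real) \<Rightarrow> 's \<Rightarrow> 'x \<Rightarrow> real" where
  "Qtilde F Q s x = (\<Sum>x'\<in>Fplus F s x. Q x')"

lemma phased_in_redundancy_bound:
  fixes M t :: real
  assumes "M > 0"
  shows "t + 1 - 2 powr t / M \<le> log 2 M + phased_in_redundancy"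
proof -
  define L where "L = ln (2::real)"
  have L: "L > 0" unfolding L_def by simp
  \<comment> \<open>This is \<open>ln z \<le> z - 1\<close> for \<open>z = 2\<^sup>t ln 2 / M\<close>, with equality at \<open>2\<^sup>t = M lg e\<close>.\<close>
  define z where "z = 2 powr t / M * L"
  have "ln z \<le> z - 1"
    using assms L by (intro ln_le_minus_one) (simp add: z_def)
  moreover have "ln z = t * L - ln M + ln L"
    using assms L by (simp add: z_def ln_mult ln_div L_def ln_powr)
  ultimately have "(t + 1 - 2 powr t / M) * L \<le> ln M - ln L + L - 1"
    unfolding z_def by (simp add: algebra_simps)
  also have "\<dots> = (log 2 M + phased_in_redundancy) * L"
    using L by (simp add: phased_in_redundancy_def log_def L_def ln_div algebra_simps)
  finally show ?thesis
    using L by simp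
qed

lemma phased_in_redundancy_nonneg: "phased_in_redundancy \<ge> 0"
  using phased_in_redundancy_bound[of 1 0] by simp

lemma card_mult_sum_le_if_dominates:
  fixes w :: "'a \<Rightarrow> real"
  assumes "finite A" and "S \<subseteq> A" and "\<And>a b. a \<in> S \<Longrightarrow> b \<in> A - S \<Longrightarrow> w b \<le> w a"
  shows "real (card S) * sum w A \<le> real (card A) * sum w S"
proof -
  have "(\<Sum>a\<in>S. \<Sum>b\<in>A - S. w b) \<le> (\<Sum>a\<in>S. \<Sum>b\<in>A - S. w a)"
    using assms(3) by (intro sum_mono) auto
  then have "real (card S) * sum w (A - S) \<le> real (card (A - S)) * sum w S"
    by (simp add: sum_distrib_right mult.commute)
  moreover have "sum w A = sum w S + sum w (A - S)"
    using sum.subset_diff[OF assms(2,1), of w] by simp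
  moreover have "real (card A) = real (card S) + real (card (A - S))"
    using card_Diff_subset[OF finite_subset[OF assms(2,1)] assms(2)] card_mono[OF assms(1,2)]
    by (simp add: of_nat_diff)
  ultimately show ?thesis
    by (simp add: algebra_simps)
qed

lemma phased_in_lengths:
  assumes "phased_in A c" and "card A \<ge> 2" and k_def: "k = nat \<lceil>log 2 (real (card A))\<rceil>"
  shows "k \<ge> 1"
    and "real (card {a\<in>A. length (c a) = k - 1}) = 2 ^ k - real (card A)"
    and "\<And>a. a \<in> A \<Longrightarrow> length (c a) = k - 1 \<or> length (c a) = k"
proof -
  have fin: "finite A"
    using assms(1) by (simp add: phased_in_def)
  have short: "card {a\<in>A. length (c a) = k - 1} = 2 ^ k - card A"
    and long: "card {a\<in>A. length (c a) = k} = 2 * card A - 2 ^ k"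
    and len: "\<And>a. a \<in> A \<Longrightarrow> length (c a) = k - 1 \<or> length (c a) = k"
    using assms by (auto simp: phased_in_def Let_def k_def)
  have "log 2 (real (card A)) > 0"
    using assms(2) by simp
  then show k: "k \<ge> 1"
    unfolding k_def by linarith
  have "{a\<in>A. length (c a) = k - 1} \<union> {a\<in>A. length (c a) = k} = A"
    using len by auto
  moreover have "{a\<in>A. length (c a) = k - 1} \<inter> {a\<in>A. length (c a) = k} = {}"
    using k by auto
  ultimately have "card {a\<in>A. length (c a) = k - 1} + card {a\<in>A. length (c a) = k} = card A"
    using fin by (metis card_Un_disjoint finite_Un)
  then have "card A \<le> 2 ^ k"
    using short long by linarith
  then show "real (card {a\<in>A. length (c a) = k - 1}) = 2 ^ k - real (card A)"
    using short by (simp add: of_nat_diff)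
  show "\<And>a. a \<in> A \<Longrightarrow> length (c a) = k - 1 \<or> length (c a) = k"
    by (fact len)
qed

lemma phased_in_cost_eq:
  fixes w :: "'a \<Rightarrow> real"
  assumes ph: "phased_in A c" and card_A: "card A \<ge> 2" and k_def: "k = nat \<lceil>log 2 (real (card A))\<rceil>"
  shows "(\<Sum>a\<in>A. w a * real (length (c a))) = real k * sum w A - sum w {a\<in>A. length (c a) = k - 1}"
proof -
  define S where "S = {a\<in>A. length (c a) = k - 1}"
  note lengths = phased_in_lengths[OF ph card_A k_def, folded S_def]
  have fin: "finite A" and SA: "S \<subseteq> A"
    using ph by (auto simp: phased_in_def S_def)
  have length_S: "real (length (c a)) = real k - (if a \<in> S then 1 else 0)" if a: "a \<in> A" for a
  proof (cases "a \<in> S")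
    case True
    then show ?thesis
      using lengths(1) by (simp add: S_def of_nat_diff)
  next
    case False
    then show ?thesis
      using lengths(3)[OF a] a by (simp add: S_def)
  qed
  have "(\<Sum>a\<in>A. w a * real (length (c a))) = (\<Sum>a\<in>A. w a * real k - (if a \<in> S then w a else 0))"
    by (intro sum.cong) (simp_all add: length_S right_diff_distrib)
  also have "\<dots> = real k * sum w A - sum w S"
    using fin SA by (simp add: sum_subtractf sum_distrib_left mult.commute Int_absorb1 Int_absorb2
        flip: sum.inter_restrict)
  finally show ?thesis
    unfolding S_def .
qed

lemma phased_in_matched_cost_le:
  fixes w :: "'a \<Rightarrow> real"
  assumes matched: "phased_in_matched A c w" and w: "\<And>a. a \<in> A \<Longrightarrow> w a \<ge> 0"
  shows "(\<Sum>a\<in>A. w a * real (length (c a)))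
           \<le> sum w A * (log 2 (real (card A)) + phased_in_redundancy)"
proof (cases "card A = 1")
  case True
  with matched have "\<forall>a\<in>A. c a = []"
    by (simp add: phased_in_matched_def phased_in_def)
  then show ?thesis
    using True phased_in_redundancy_nonneg w by (simp add: sum_nonneg)
next
  case False
  have ph: "phased_in A c"
    using matched by (simp add: phased_in_matched_def)
  have fin: "finite A" and card_A: "card A \<ge> 2"
    using ph False by (auto simp: phased_in_def)
  define k where "k = nat \<lceil>log 2 (real (card A))\<rceil>"
  define S where "S = {a\<in>A. length (c a) = k - 1}"
  note lengths = phased_in_lengths[OF ph card_A k_def, folded S_def]
  have SA: "S \<subseteq> A"
    by (auto simp: S_def)
  have "real (card S) * sum w A \<le> real (card A) * sum w S"
  proof (rule card_mult_sum_le_if_dominates[OF fin SA])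
    fix a b
    assume a: "a \<in> S" and b: "b \<in> A - S"
    then have "length (c a) < length (c b)"
      using lengths(1) lengths(3)[of b] by (auto simp: S_def)
    then show "w b \<le> w a"
      using matched a b SA unfolding phased_in_matched_def by blast
  qed
  then have share: "real (card S) * sum w A / real (card A) \<le> sum w S"
    using card_A by (simp add: pos_divide_le_eq mult.commute)
  have "(\<Sum>a\<in>A. w a * real (length (c a))) = real k * sum w A - sum w S"
    unfolding S_def by (rule phased_in_cost_eq[OF ph card_A k_def])
  also have "\<dots> \<le> real k * sum w A - real (card S) * sum w A / real (card A)"
    using share by linarith
  also have "\<dots> = sum w A * (real k + 1 - 2 powr real k / real (card A))"
    using card_A by (simp add: lengths(2) powr_realpow field_simps)
  also have "\<dots> \<le> sum w A * (log 2 (real (card A)) + phased_in_redundancy)"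
    using card_A w by (intro mult_left_mono phased_in_redundancy_bound) (auto simp: sum_nonneg)
  finally show ?thesis .
qed

lemma card_filters_cover:
  assumes "finite X" and "card {x\<in>X. P x} + card {x\<in>X. R x} = card X"
    and "\<And>x. P x \<Longrightarrow> \<not> R x" and "x \<in> X"
  shows "P x \<or> R x"
proof -
  have "card ({x\<in>X. P x} \<union> {x\<in>X. R x}) = card X"
    using assms(1-3) by (subst card_Un_disjoint) auto
  then have "{x\<in>X. P x} \<union> {x\<in>X. R x} = X"
    using assms(1) by (intro card_subset_eq) auto
  then show ?thesis
    using assms(4) by blast
qed

lemma sum_mult_two_values:
  fixes w :: "'a \<Rightarrow> real"
  assumes "\<And>x. x \<in> X \<Longrightarrow> f x = m \<or> f x = m + 1" and "sum w X = 1"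
  shows "(\<Sum>x\<in>X. w x * real (f x)) = real m + (\<Sum>x\<in>{x\<in>X. f x = m + 1}. w x)"
proof -
  have "finite X"
    using assms(2) by (metis sum.infinite zero_neq_one)
  have "(\<Sum>x\<in>X. w x * real (f x)) = (\<Sum>x\<in>X. w x * real m + (if f x = m + 1 then w x else 0))"
    using assms(1) by (intro sum.cong) (auto simp: algebra_simps)
  also have "\<dots> = real m + (\<Sum>x\<in>{x\<in>X. f x = m + 1}. w x)"
    using \<open>finite X\<close> assms(2) by (simp add: sum.distrib sum.inter_filter flip: sum_distrib_right)
  finally show ?thesis .
qed

lemma card_Xs_pos:
  fixes F :: "'x::finite \<Rightarrow> 's \<Rightarrow> 'x"
  shows "card (Xs F s) > 0"
  by (simp add: Xs_def card_gt_0_iff)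

lemma card_Fplus_pos:
  fixes F :: "'x::finite \<Rightarrow> 's \<Rightarrow> 'x"
  assumes "x \<in> Xs F s"
  shows "card (Fplus F s x) > 0"
  using assms by (auto simp: Xs_def Fplus_def card_gt_0_iff)

lemma one_le_card_div_card_Xs:
  fixes F :: "'x::finite \<Rightarrow> 's \<Rightarrow> 'x"
  shows "1 \<le> card (UNIV :: 'x set) div card (Xs F s)"
  using card_Xs_pos[of F s] card_mono[of UNIV "Xs F s"] by (simp add: Suc_le_eq div_greater_zero_iff)

lemma card_Fplus_cases_if_balanced:
  fixes F :: "'x::finite \<Rightarrow> 's \<Rightarrow> 'x"
  assumes "card {x\<in>Xs F s. card (Fplus F s x) = N div card (Xs F s)} = card (Xs F s) - N mod card (Xs F s)"
    and "card {x\<in>Xs F s. card (Fplus F s x) = N div card (Xs F s) + 1} = N mod card (Xs F s)"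
    and "x \<in> Xs F s"
  shows "card (Fplus F s x) = N div card (Xs F s) \<or> card (Fplus F s x) = N div card (Xs F s) + 1"
proof (rule card_filters_cover[where P = "\<lambda>x. card (Fplus F s x) = N div card (Xs F s)"
      and R = "\<lambda>x. card (Fplus F s x) = N div card (Xs F s) + 1"])
  show "card {x\<in>Xs F s. card (Fplus F s x) = N div card (Xs F s)}
      + card {x\<in>Xs F s. card (Fplus F s x) = N div card (Xs F s) + 1} = card (Xs F s)"
    using assms(1,2) mod_less_divisor[OF card_Xs_pos[of F s], of N] by simp
qed (use assms(3) in auto)

lemma sum_Xs_Fplus:
  fixes F :: "'x::finite \<Rightarrow> 's \<Rightarrow> 'x" and g :: "'x \<Rightarrow> real"
  shows "(\<Sum>x\<in>Xs F s. \<Sum>x'\<in>Fplus F s x. g x') = (\<Sum>x'\<in>UNIV. g x')"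
  using sum.group[of UNIV "Xs F s" "\<lambda>x'. F x' s" g] by (simp add: Xs_def Fplus_def)

lemma sum_Qtilde:
  fixes F :: "'x::finite \<Rightarrow> 's \<Rightarrow> 'x"
  shows "(\<Sum>x\<in>Xs F s. Qtilde F Q s x) = sum Q UNIV"
  by (simp add: Qtilde_def sum_Xs_Fplus)

lemma symbol_cost_le_log_expected_card:
  fixes F :: "'x::finite \<Rightarrow> 's \<Rightarrow> 'x" and Q :: "'x \<Rightarrow> real"
  assumes Q_nonneg: "\<And>x. Q x \<ge> 0" and Q_sum: "sum Q UNIV = 1"
    and codes: "\<forall>x\<in>Xs F s. phased_in_matched (Fplus F s x) (\<lambda>x'. E x' s) Q"
  shows "(\<Sum>x'\<in>UNIV. Q x' * real (length (E x' s)))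
           \<le> log 2 (\<Sum>x\<in>Xs F s. Qtilde F Q s x * real (card (Fplus F s x))) + phased_in_redundancy"
proof -
  have Qtilde_sum: "(\<Sum>x\<in>Xs F s. Qtilde F Q s x) = 1"
    using Q_sum by (simp add: sum_Qtilde)
  have "(\<Sum>x'\<in>UNIV. Q x' * real (length (E x' s)))
      = (\<Sum>x\<in>Xs F s. \<Sum>x'\<in>Fplus F s x. Q x' * real (length (E x' s)))"
    by (simp add: sum_Xs_Fplus)
  also have "\<dots> \<le> (\<Sum>x\<in>Xs F s. Qtilde F Q s x * (log 2 (real (card (Fplus F s x))) + phased_in_redundancy))"
    unfolding Qtilde_def using codes Q_nonneg by (intro sum_mono phased_in_matched_cost_le) auto
  also have "\<dots> = (\<Sum>x\<in>Xs F s. Qtilde F Q s x * log 2 (real (card (Fplus F s x)))) + phased_in_redundancy"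
    by (simp add: distrib_left sum.distrib Qtilde_sum flip: sum_distrib_right)
  also have "(\<Sum>x\<in>Xs F s. Qtilde F Q s x * log 2 (real (card (Fplus F s x))))
      \<le> log 2 (\<Sum>x\<in>Xs F s. Qtilde F Q s x * real (card (Fplus F s x)))"
  proof -
    have "(\<Sum>x\<in>Xs F s. Qtilde F Q s x * log 2 (real (card (Fplus F s x))))
        \<le> log 2 (\<Sum>x\<in>Xs F s. Qtilde F Q s x *\<^sub>R real (card (Fplus F s x)))"
      using Qtilde_sum Q_nonneg card_Fplus_pos[of _ F s]
      by (intro concave_on_sum[OF _ _ log_concave]) (auto simp: Xs_def Qtilde_def sum_nonneg)
    then show ?thesis
      by simp
  qed
  finally show ?thesis
    by simp
qed

lemma avg_len_eq_sum_symbols: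
  "avg_len p Q E = (\<Sum>s\<in>UNIV. p s * (\<Sum>x'\<in>UNIV. Q x' * real (length (E x' s))))"
  unfolding avg_len_def by (subst sum.swap) (simp add: sum_distrib_left mult.assoc)

lemma sum_log_eq_entropy_KL:
  fixes p q a :: "'s::finite \<Rightarrow> real"
  assumes "\<And>s. p s > 0" and "\<And>s. q s > 0" and "\<And>s. a s > 0"
  shows "(\<Sum>s\<in>UNIV. p s * log 2 (a s)) = entropy p + KL p q + (\<Sum>s\<in>UNIV. p s * log 2 (a s * q s))"
proof -
  have "p s * log 2 (a s)
      = - (p s * log 2 (p s)) + p s * log 2 (p s / q s) + p s * log 2 (a s * q s)" for s
    using assms[of s] by (simp add: log_divide log_mult algebra_simps)
  then show ?thesis
    by (simp add: entropy_def KL_def sum.distrib sum_subtractf)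
qed

theorem theorem5:
  fixes p :: "'s::finite \<Rightarrow> real"
    and E :: "'x::finite \<Rightarrow> 's \<Rightarrow> bool list"
    and F :: "'x \<Rightarrow> 's \<Rightarrow> 'x"
    and Q :: "'x \<Rightarrow> real"
  assumes card_S: "card (UNIV :: 's set) \<ge> 2"
    and p_pos: "\<forall>s. p s > 0"
    and p_sum: "(\<Sum>s\<in>UNIV. p s) = 1"
    and sAEDS: "is_sAEDS E F"
    and balanced: "\<forall>s. card {x\<in>Xs F s. card (Fplus F s x) = card (UNIV :: 'x set) div card (Xs F s)}
                         = card (Xs F s) - card (UNIV :: 'x set) mod card (Xs F s)
                      \<and> card {x\<in>Xs F s. card (Fplus F s x) = card (UNIV :: 'x set) div card (Xs F s) + 1}
                         = card (UNIV :: 'x set) mod card (Xs F s)"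
    and stat: "stationary p F Q"
    and codes: "\<forall>s. \<forall>x\<in>Xs F s. phased_in_matched (Fplus F s x) (\<lambda>x'. E x' s) Q"
  shows "avg_len p Q E \<le>
     entropy p + KL p (\<lambda>s. real (card (Xs F s)) / real (card (UNIV :: 'x set)))
     + (log 2 (log 2 (exp 1)) + 1 - log 2 (exp 1))
     + (\<Sum>s\<in>UNIV. p s * log 2
          ((real (card (UNIV :: 'x set) div card (Xs F s))
            + (\<Sum>x\<in>{x\<in>Xs F s. card (Fplus F s x) = card (UNIV :: 'x set) div card (Xs F s) + 1}.
                 \<Sum>x'\<in>Fplus F s x. Q x'))
           / (real (card (UNIV :: 'x set)) / real (card (Xs F s)))))"
proof -
  let ?N = "card (UNIV :: 'x set)"
  define m where "m s = ?N div card (Xs F s)" for s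
  define A where "A s = real (m s) + (\<Sum>x\<in>{x\<in>Xs F s. card (Fplus F s x) = m s + 1}. Qtilde F Q s x)" for s
  define q where "q = (\<lambda>s. real (card (Xs F s)) / real ?N)"
  have Q_nonneg: "\<And>x. Q x \<ge> 0" and Q_sum: "sum Q UNIV = 1"
    using stat unfolding stationary_def by blast+
  have "card (Fplus F s x) = m s \<or> card (Fplus F s x) = m s + 1" if "x \<in> Xs F s" for s x
    using card_Fplus_cases_if_balanced[OF balanced[rule_format, THEN conjunct1]
        balanced[rule_format, THEN conjunct2] that]
    unfolding m_def .
  then have "(\<Sum>x\<in>Xs F s. Qtilde F Q s x * real (card (Fplus F s x))) = A s" for s
    unfolding A_def using Q_sum by (intro sum_mult_two_values) (simp_all add: sum_Qtilde)
  then have cost: "(\<Sum>x'\<in>UNIV. Q x' * real (length (E x' s))) \<le> log 2 (A s) + phased_in_redundancy" for s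
    using symbol_cost_le_log_expected_card[OF Q_nonneg Q_sum, where F = F and s = s and E = E] codes
    by simp
  have A_pos: "A s > 0" and q_pos: "q s > 0" for s
    using one_le_card_div_card_Xs[of F s] card_Xs_pos[of F s] Q_nonneg
    by (simp_all add: A_def m_def q_def Qtilde_def sum_nonneg add_pos_nonneg card_gt_0_iff)
  have "avg_len p Q E \<le> (\<Sum>s\<in>UNIV. p s * (log 2 (A s) + phased_in_redundancy))"
    unfolding avg_len_eq_sum_symbols using cost p_pos by (intro sum_mono mult_left_mono) (auto simp: less_imp_le)
  also have "\<dots> = (\<Sum>s\<in>UNIV. p s * log 2 (A s)) + phased_in_redundancy"
    using p_sum by (simp add: distrib_left sum.distrib flip: sum_distrib_right)
  also have "(\<Sum>s\<in>UNIV. p s * log 2 (A s)) = entropy p + KL p q + (\<Sum>s\<in>UNIV. p s * log 2 (A s * q s))"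
    using p_pos q_pos A_pos by (intro sum_log_eq_entropy_KL) auto
  finally show ?thesis
    by (simp add: A_def m_def q_def Qtilde_def phased_in_redundancy_def add_ac)
qed

end
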